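(* Let $n\geq 2$, $r>0$, $\varphi\in L^\infty(\mathbb{S}^{n-1})$, and let $A_{n,r}>0$ be the constant such that $\int_{\mathbb{S}^{n-1}}|\xi\cdot\theta|^r\,d\sigma(\theta)=A_{n,r}|\xi|^r$ for all $\xi\in\mathbb{R}^n$. For $\theta\in\mathbb{S}^{n-1}$ let $m_\theta(\xi)=\frac{|\xi\cdot\theta|^r}{|\xi|^r}$, and let $$m_r(\xi)=\frac{\int_{\mathbb{S}^{n-1}}|\xi\cdot\theta|^r\varphi(\theta)\,d\sigma(\theta)}{\int_{\mathbb{S}^{n-1}}|\xi\cdot\theta|^r\,d\sigma(\theta)}.$$ Then for all $f\in C_0^\infty(\mathbb{R}^n)$, $$T_{m_r}f(x)=A_{n,r}^{-1}\int_{\mathbb{S}^{n-1}}T_{m_\theta}f(x)\varphi(\theta)\,d\sigma(\theta)$$ for almost every $x\in\mathbb{R}^n$.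
   Context: $\sigma$ denotes surface measure on $\mathbb{S}^{n-1}$. For a bounded function $m$ on $\mathbb{R}^n$, $T_m$ is defined on $L^2(\mathbb{R}^n)$ by $\widehat{T_mf}(\xi)=m(\xi)\widehat f(\xi)$. *)

theory Defs
  imports "HOL-Analysis.Analysis"
begin

fun Ck_on_UNIV :: "nat \<Rightarrow> ('a::euclidean_space \<Rightarrow> 'b::real_normed_vector) \<Rightarrow> bool" where
  "Ck_on_UNIV 0 f = continuous_on UNIV f"
| "Ck_on_UNIV (Suc k) f = (f differentiable_on UNIV \<and> continuous_on UNIV f \<and>
      (\<forall>v. Ck_on_UNIV k (\<lambda>x. frechet_derivative f (at x) v)))"

definition smooth_fun :: "('a::euclidean_space \<Rightarrow> 'b::real_normed_vector) \<Rightarrow> bool" where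
  "smooth_fun f \<longleftrightarrow> (\<forall>k. Ck_on_UNIV k f)"

definition test_function :: "('a::euclidean_space \<Rightarrow> complex) \<Rightarrow> bool" where
  "test_function f \<longleftrightarrow> smooth_fun f \<and> compact (closure {x. f x \<noteq> 0})"

definition fourier :: "('a::euclidean_space \<Rightarrow> complex) \<Rightarrow> 'a \<Rightarrow> complex" where
  "fourier f \<xi> = (\<integral>x. f x * cis (- 2 * pi * (x \<bullet> \<xi>)) \<partial>lborel)"

text \<open>For f in C_0^infinity, hat f is Schwartz, so m * hat f is
  integrable for bounded measurable m and the L^2-defined operator T_m f agrees a.e. with the
  inverse Fourier integral of m * hat f.\<close>
definition multiplier_op :: "('a::euclidean_space \<Rightarrow> complex) \<Rightarrow> ('a \<Rightarrow> complex) \<Rightarrow> 'a \<Rightarrow> complex" where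
  "multiplier_op m f x = (\<integral>\<xi>. m \<xi> * fourier f \<xi> * cis (2 * pi * (x \<bullet> \<xi>)) \<partial>lborel)"

text \<open>Surface measure on the unit sphere S^{n-1}, via the cone construction:
  sigma(E) = n * Lebesgue measure of {x : 0 < |x| <= 1, x/|x| in E}.\<close>
definition sphere_measure :: "'a::euclidean_space measure" where
  "sphere_measure = distr
     (density lborel (\<lambda>x. ennreal (real DIM('a)) * indicator (cball 0 1 - {0}) x))
     (restrict_space borel (sphere 0 1))
     (\<lambda>x. x /\<^sub>R norm x)"

end

(*
  For a test function f the Fourier transform hat f is integrable: differentiating n + 1 times
  along each coordinate axis gives |xi_j|^(n+1) |hat f(xi)| <= C, and these bounds are summed over
  dyadic cubes into an integrable majorant. So T_m f(x) is an absolutely convergent integral for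
  every bounded multiplier m. The normalisation defining A_{n,r} turns m_r pointwise into
  A_{n,r}^(-1) times the sigma-average of m_theta phi(theta); since |m_theta| <= 1 and phi is
  integrable for the finite measure sigma, Fubini on sigma x Lebesgue exchanges the theta- and
  xi-integrals. The identity therefore holds at every x.
*)
theory Submission
  imports Defs
begin

section \<open>Test functions\<close>

definition dir_deriv :: "('a::euclidean_space \<Rightarrow> 'b::real_normed_vector) \<Rightarrow> 'a \<Rightarrow> 'a \<Rightarrow> 'b" where
  "dir_deriv g v = (\<lambda>x. frechet_derivative g (at x) v)"

definition tsupport :: "('a::topological_space \<Rightarrow> 'b::zero) \<Rightarrow> 'a set" where
  "tsupport g = closure {x. g x \<noteq> 0}"

lemma not_in_tsupport: "x \<notin> tsupport g \<Longrightarrow> g x = 0"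
  unfolding tsupport_def using closure_subset[of "{x. g x \<noteq> 0}"] by auto

lemma closed_tsupport: "closed (tsupport g)"
  unfolding tsupport_def by simp

lemma test_function_iff: "test_function g \<longleftrightarrow> smooth_fun g \<and> compact (tsupport g)"
  unfolding test_function_def tsupport_def ..

lemma smooth_fun_continuous: "smooth_fun f \<Longrightarrow> continuous_on UNIV f"
  unfolding smooth_fun_def by (metis Ck_on_UNIV.simps(1))

lemma smooth_fun_has_derivative:
  "smooth_fun f \<Longrightarrow> (f has_derivative frechet_derivative f (at x)) (at x)"
  unfolding smooth_fun_def
  by (metis Ck_on_UNIV.simps(2) UNIV_I differentiable_on_def frechet_derivative_works)

lemma smooth_fun_dir_deriv: "smooth_fun f \<Longrightarrow> smooth_fun (dir_deriv f v)"
  unfolding smooth_fun_def dir_deriv_def by (metis Ck_on_UNIV.simps(2))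

lemma dir_deriv_eq_0_outside_tsupport:
  assumes "x \<notin> tsupport g"
  shows "dir_deriv g v x = 0"
proof -
  have "(g has_derivative (\<lambda>_. 0)) (at x)"
    by (rule has_derivative_transform_within_open[of "\<lambda>_. 0" _ x UNIV "- tsupport g"])
      (auto simp: closed_tsupport not_in_tsupport assms open_Compl)
  then show ?thesis
    unfolding dir_deriv_def by (metis frechet_derivative_at)
qed

lemma tsupport_dir_deriv_subset: "tsupport (dir_deriv g v) \<subseteq> tsupport g"
  unfolding tsupport_def[of "dir_deriv g v"]
  by (rule closure_minimal) (use dir_deriv_eq_0_outside_tsupport closed_tsupport in auto)

lemma test_function_dir_deriv:
  assumes "test_function g"
  shows "test_function (dir_deriv g v)"
proof -
  have "bounded (tsupport (dir_deriv g v))"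
    using assms tsupport_dir_deriv_subset unfolding test_function_iff
    by (meson bounded_subset compact_imp_bounded)
  then show ?thesis
    using assms smooth_fun_dir_deriv closed_tsupport
    unfolding test_function_iff compact_eq_bounded_closed by blast
qed

lemma test_function_bounded:
  assumes "test_function g"
  obtains B where "\<And>x. norm (g x) \<le> B"
proof -
  have "compact (g ` tsupport g)"
    using assms unfolding test_function_iff
    by (meson compact_continuous_image continuous_on_subset smooth_fun_continuous subset_UNIV)
  then obtain B where B: "\<forall>y \<in> g ` tsupport g. norm y \<le> B"
    using compact_imp_bounded bounded_iff by metis
  have "norm (g x) \<le> max B 0" for x
    using B not_in_tsupport[of x g] by (cases "x \<in> tsupport g") auto
  then show thesis by (rule that)
qed

lemma integrable_test_function_mult:
  fixes g :: "'a::euclidean_space \<Rightarrow> complex"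
  assumes "test_function g" "continuous_on UNIV e"
  shows "integrable lborel (\<lambda>x. g x * e x)"
proof -
  have "continuous_on UNIV (\<lambda>x. g x * e x)"
    using assms smooth_fun_continuous unfolding test_function_iff by (intro continuous_intros) auto
  then have "integrable lborel (\<lambda>x. indicator (tsupport g) x *\<^sub>R (g x * e x))"
    using assms unfolding test_function_iff
    by (intro borel_integrable_compact) (auto intro: continuous_on_subset)
  moreover have "indicator (tsupport g) x *\<^sub>R (g x * e x) = g x * e x" for x
    using not_in_tsupport[of x g] by (cases "x \<in> tsupport g") auto
  ultimately show ?thesis by simp
qed

lemma smooth_fun_has_vector_derivative_line:
  assumes "smooth_fun g"
  shows "((\<lambda>s. g (x + s *\<^sub>R v)) has_vector_derivative dir_deriv g v (x + s *\<^sub>R v)) (at s)"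
proof -
  let ?D = "frechet_derivative g (at (x + s *\<^sub>R v))"
  have "((\<lambda>s. x + s *\<^sub>R v) has_derivative (\<lambda>u. u *\<^sub>R v)) (at s)"
    by (auto intro!: derivative_eq_intros)
  from has_derivative_compose[OF this smooth_fun_has_derivative[OF assms]]
  have "((\<lambda>s. g (x + s *\<^sub>R v)) has_derivative (\<lambda>u. ?D (u *\<^sub>R v))) (at s)"
    by (simp add: o_def)
  moreover have "linear ?D"
    using smooth_fun_has_derivative[OF assms] has_derivative_linear by blast
  ultimately show ?thesis
    unfolding has_vector_derivative_def dir_deriv_def by (simp add: linear_scale)
qed

lemma smooth_fun_increment_bound:
  fixes g :: "'a::euclidean_space \<Rightarrow> 'b::real_inner"
  assumes "smooth_fun g" "\<And>y. norm (dir_deriv g v y) \<le> B" "t > 0"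
  shows "norm (g (x + t *\<^sub>R v) - g x) \<le> B * t"
proof -
  have cont: "continuous_on {0..t} (\<lambda>s. g (x + s *\<^sub>R v))"
    by (intro continuous_on_compose2[OF smooth_fun_continuous[OF assms(1)]])
      (auto intro!: continuous_intros)
  have deriv: "((\<lambda>s. g (x + s *\<^sub>R v)) has_derivative (\<lambda>u. u *\<^sub>R dir_deriv g v (x + s *\<^sub>R v))) (at s)"
    if "0 < s" "s < t" for s
    using smooth_fun_has_vector_derivative_line[OF assms(1)] unfolding has_vector_derivative_def .
  obtain s where "norm (g (x + t *\<^sub>R v) - g (x + 0 *\<^sub>R v)) \<le> norm ((t - 0) *\<^sub>R dir_deriv g v (x + s *\<^sub>R v))"
    using mvt_general[OF assms(3) cont deriv] by blast
  then have "norm (g (x + t *\<^sub>R v) - g x) \<le> norm (t *\<^sub>R dir_deriv g v (x + s *\<^sub>R v))"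
    by simp
  also have "\<dots> \<le> t * B"
    using assms(2)[of "x + s *\<^sub>R v"] assms(3) by (simp add: mult_left_mono)
  finally show ?thesis by (simp add: mult.commute)
qed

section \<open>Fourier transform of test functions\<close>

lemma difference_quotient_tendsto:
  fixes f :: "real \<Rightarrow> 'b::real_normed_vector"
  assumes "(f has_vector_derivative D) (at a)" "h \<longlonglongrightarrow> 0" "\<And>k. h k \<noteq> 0"
  shows "(\<lambda>k. (f (a + h k) - f a) /\<^sub>R h k) \<longlonglongrightarrow> D"
proof -
  have "((\<lambda>t. norm (f (a + t) - f a - t *\<^sub>R D) / norm t) \<longlongrightarrow> 0) (at 0)"
    using assms(1) unfolding has_vector_derivative_def has_derivative_at by simp
  moreover have "filterlim h (at 0) sequentially"
    using assms(2,3) by (simp add: filterlim_at)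
  ultimately have "(\<lambda>k. norm (f (a + h k) - f a - h k *\<^sub>R D) / norm (h k)) \<longlonglongrightarrow> 0"
    by (rule filterlim_compose)
  moreover have "norm (f (a + h k) - f a - h k *\<^sub>R D) / norm (h k) = norm ((f (a + h k) - f a) /\<^sub>R h k - D)" for k
  proof -
    have "(f (a + h k) - f a) /\<^sub>R h k - D = (f (a + h k) - f a - h k *\<^sub>R D) /\<^sub>R h k"
      using assms(3)[of k] by (simp add: algebra_simps)
    then show ?thesis by (simp add: divide_inverse mult.commute)
  qed
  ultimately show ?thesis
    by (simp add: tendsto_norm_zero_iff LIM_zero_iff)
qed

lemma integral_lborel_translate:
  fixes G :: "'a::euclidean_space \<Rightarrow> 'b::{banach, second_countable_topology}"
  assumes "G \<in> borel_measurable borel"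
  shows "(\<integral>x. G (c + x) \<partial>lborel) = (\<integral>x. G x \<partial>lborel)"
  using integral_distr[of "(+) c" lborel borel G] assms by (simp add: lborel_distr_plus)

lemma integrable_lborel_translate:
  fixes G :: "'a::euclidean_space \<Rightarrow> 'b::{banach, second_countable_topology}"
  assumes "G \<in> borel_measurable borel" "integrable lborel G"
  shows "integrable lborel (\<lambda>x. G (c + x))"
  using integrable_distr_eq[of "(+) c" lborel borel G] assms by (simp add: lborel_distr_plus)

lemma norm_fourier_le: "norm (fourier g \<xi>) \<le> (\<integral>x. norm (g x) \<partial>lborel)"
proof -
  have "norm (fourier g \<xi>) \<le> (\<integral>x. norm (g x * cis (- 2 * pi * (x \<bullet> \<xi>))) \<partial>lborel)"
    unfolding fourier_def by (rule integral_norm_bound)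
  then show ?thesis by (simp add: norm_mult)
qed

lemma borel_measurable_fourier:
  fixes g :: "'a::euclidean_space \<Rightarrow> complex"
  assumes "continuous_on UNIV g"
  shows "fourier g \<in> borel_measurable borel"
proof -
  have "continuous_on UNIV (\<lambda>(\<xi>, x). g x * cis (- 2 * pi * (x \<bullet> \<xi>)) :: complex)"
    unfolding case_prod_beta
    by (intro continuous_intros continuous_on_compose2[OF assms]) auto
  then have "(\<lambda>(\<xi>, x). g x * cis (- 2 * pi * (x \<bullet> \<xi>))) \<in> borel_measurable (lborel \<Otimes>\<^sub>M lborel)"
    unfolding lborel_prod using borel_measurable_continuous_onI by simp
  then show ?thesis
    unfolding fourier_def[abs_def] measurable_lborel2[symmetric]
    by (rule lborel.borel_measurable_lebesgue_integral)
qed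

lemma borel_measurable_fourier_test_function:
  "test_function g \<Longrightarrow> fourier g \<in> borel_measurable lborel"
  using borel_measurable_fourier smooth_fun_continuous
  unfolding test_function_iff measurable_lborel2 by blast

lemma fourier_integrand_shift:
  "g (x + c) * cis (- 2 * pi * (x \<bullet> \<xi>))
     = cis (2 * pi * (c \<bullet> \<xi>)) * (g (c + x) * cis (- 2 * pi * ((c + x) \<bullet> \<xi>)))"
  by (simp add: cis_mult inner_add_left algebra_simps)

lemma fourier_shift:
  fixes g :: "'a::euclidean_space \<Rightarrow> complex"
  assumes "g \<in> borel_measurable borel"
  shows "fourier (\<lambda>x. g (x + c)) \<xi> = cis (2 * pi * (c \<bullet> \<xi>)) * fourier g \<xi>"
proof -
  have "(\<lambda>x. cis (- 2 * pi * (x \<bullet> \<xi>))) \<in> borel_measurable borel"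
    by (intro borel_measurable_continuous_onI continuous_intros)
  with assms have "(\<lambda>x. g x * cis (- 2 * pi * (x \<bullet> \<xi>))) \<in> borel_measurable borel"
    by (rule borel_measurable_times)
  from integral_lborel_translate[OF this, of c] show ?thesis
    unfolding fourier_def fourier_integrand_shift integral_mult_right_zero by simp
qed

lemma fourier_difference_quotient:
  fixes g :: "'a::euclidean_space \<Rightarrow> complex"
  assumes "test_function g"
  shows "fourier (\<lambda>x. (g (x + t *\<^sub>R v) - g x) /\<^sub>R t) \<xi>
       = (cis (2 * pi * t * (v \<bullet> \<xi>)) - 1) /\<^sub>R t * fourier g \<xi>"
proof -
  define G where "G x = g x * cis (- 2 * pi * (x \<bullet> \<xi>))" for x
  have G_meas: "G \<in> borel_measurable borel"
    unfolding G_def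
    by (intro borel_measurable_continuous_onI continuous_intros)
      (use assms smooth_fun_continuous in \<open>auto simp: test_function_iff\<close>)
  have G_int: "integrable lborel G"
    unfolding G_def by (intro integrable_test_function_mult[OF assms] continuous_intros)
  have shifted_int: "integrable lborel (\<lambda>x. g (x + t *\<^sub>R v) * cis (- 2 * pi * (x \<bullet> \<xi>)))"
    unfolding fourier_integrand_shift
    using integrable_lborel_translate[OF G_meas G_int] by (simp add: G_def)
  have g_meas: "g \<in> borel_measurable borel"
    using assms unfolding test_function_iff by (auto intro: borel_measurable_continuous_onI smooth_fun_continuous)
  have "fourier (\<lambda>x. (g (x + t *\<^sub>R v) - g x) /\<^sub>R t) \<xi>
      = (\<integral>x. (g (x + t *\<^sub>R v) * cis (- 2 * pi * (x \<bullet> \<xi>)) - G x) /\<^sub>R t \<partial>lborel)"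
    unfolding fourier_def G_def by (intro Bochner_Integration.integral_cong) (auto simp: algebra_simps)
  also have "\<dots> = (fourier (\<lambda>x. g (x + t *\<^sub>R v)) \<xi> - fourier g \<xi>) /\<^sub>R t"
    using Bochner_Integration.integral_diff[OF shifted_int G_int]
    unfolding fourier_def G_def by simp
  also have "\<dots> = (cis (2 * pi * t * (v \<bullet> \<xi>)) - 1) /\<^sub>R t * fourier g \<xi>"
    using fourier_shift[OF g_meas, of "t *\<^sub>R v" \<xi>]
    by (simp add: algebra_simps)
  finally show ?thesis .
qed

lemma test_function_difference_quotient_bound:
  fixes g :: "'a::euclidean_space \<Rightarrow> complex"
  assumes g: "test_function g" and B: "\<And>y. norm (dir_deriv g v y) \<le> B"
    and R: "\<And>x. x \<in> tsupport g \<Longrightarrow> norm x \<le> R" and t: "0 < t" "t \<le> 1"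
  shows "norm ((g (x + t *\<^sub>R v) - g x) /\<^sub>R t) \<le> indicator (cball 0 (R + norm v)) x * B"
proof (cases "x \<in> cball 0 (R + norm v)")
  case True
  have "norm (g (x + t *\<^sub>R v) - g x) \<le> B * t"
    using smooth_fun_increment_bound[OF _ B t(1)] g by (simp add: test_function_iff)
  then have "norm (g (x + t *\<^sub>R v) - g x) / t \<le> B"
    using t(1) by (simp add: pos_divide_le_eq)
  then show ?thesis
    using True t(1) by (simp add: divide_inverse_commute)
next
  case False
  then have x: "R + norm v < norm x"
    by simp
  have "norm (t *\<^sub>R v) \<le> norm v"
    using t by (simp add: mult_left_le_one_le)
  then have "R < norm (x + t *\<^sub>R v)"
    using x norm_diff_ineq[of x "t *\<^sub>R v"] by linarith
  then have "x \<notin> tsupport g" "x + t *\<^sub>R v \<notin> tsupport g"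
    using R[of x] R[of "x + t *\<^sub>R v"] x norm_ge_zero[of v] by linarith+
  then show ?thesis
    using False by (simp add: not_in_tsupport)
qed

lemma tendsto_fourier_difference_quotient:
  fixes g :: "'a::euclidean_space \<Rightarrow> complex"
  assumes g: "test_function g" and h: "h \<longlonglongrightarrow> 0" "\<And>k. 0 < h k" "\<And>k. h k \<le> 1"
  shows "(\<lambda>k. fourier (\<lambda>x. (g (x + h k *\<^sub>R v) - g x) /\<^sub>R h k) \<xi>) \<longlonglongrightarrow> fourier (dir_deriv g v) \<xi>"
proof -
  obtain B where B: "\<And>y. norm (dir_deriv g v y) \<le> B"
    using test_function_bounded[OF test_function_dir_deriv[OF g, of v]] by blast
  have "bounded (tsupport g)"
    using g compact_imp_bounded by (auto simp: test_function_iff)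
  then obtain R where R: "\<And>x. x \<in> tsupport g \<Longrightarrow> norm x \<le> R"
    unfolding bounded_iff by blast
  define e where "e x = cis (- 2 * pi * (x \<bullet> \<xi>))" for x
  define Q where "Q k x = (g (x + h k *\<^sub>R v) - g x) /\<^sub>R h k * e x" for k x
  have "(\<lambda>k. Q k x) \<longlonglongrightarrow> dir_deriv g v x * e x" for x
    unfolding Q_def
    using difference_quotient_tendsto[OF smooth_fun_has_vector_derivative_line[of g x v 0] h(1)] g h(2)
    by (intro tendsto_mult_right) (auto simp: test_function_iff less_imp_neq[symmetric])
  moreover have "norm (Q k x) \<le> indicator (cball 0 (R + norm v)) x * B" for k x
    using test_function_difference_quotient_bound[OF g B R h(2,3)]
    by (simp add: Q_def e_def norm_mult)
  moreover have "Q k \<in> borel_measurable lborel" for k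
  proof -
    have gc: "continuous_on UNIV g"
      using g smooth_fun_continuous by (auto simp: test_function_iff)
    have ec: "continuous_on UNIV e"
      unfolding e_def by (intro continuous_intros)
    have "continuous_on UNIV (Q k)"
      unfolding Q_def by (intro continuous_intros ec continuous_on_compose2[OF gc]) auto
    then show ?thesis
      by (simp add: borel_measurable_continuous_onI)
  qed
  moreover have "(\<lambda>x. dir_deriv g v x * e x) \<in> borel_measurable lborel"
  proof -
    have "continuous_on UNIV (dir_deriv g v)"
      using g smooth_fun_continuous smooth_fun_dir_deriv by (auto simp: test_function_iff)
    then have "continuous_on UNIV (\<lambda>x. dir_deriv g v x * e x)"
      unfolding e_def by (intro continuous_intros)
    then show ?thesis
      by (simp add: borel_measurable_continuous_onI)
  qed
  moreover have "integrable lborel (\<lambda>x. indicator (cball 0 (R + norm v)) x * B)"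
    using borel_integrable_compact[of "cball 0 (R + norm v)" "\<lambda>_. B"] by simp
  ultimately have "(\<lambda>k. integral\<^sup>L lborel (Q k)) \<longlonglongrightarrow> (\<integral>x. dir_deriv g v x * e x \<partial>lborel)"
    by (intro integral_dominated_convergence[where w = "\<lambda>x. indicator (cball 0 (R + norm v)) x * B"]) auto
  then show ?thesis
    unfolding Q_def e_def fourier_def .
qed

lemma fourier_dir_deriv:
  fixes g :: "'a::euclidean_space \<Rightarrow> complex"
  assumes "test_function g"
  shows "fourier (dir_deriv g v) \<xi> = \<i> * complex_of_real (2 * pi * (v \<bullet> \<xi>)) * fourier g \<xi>"
proof -
  define h where "h k = inverse (real (Suc k))" for k
  have h: "h \<longlonglongrightarrow> 0" "0 < h k" "h k \<le> 1" for k
    unfolding h_def by (rule LIMSEQ_inverse_real_of_nat) (auto simp: field_simps)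
  have "((\<lambda>t. cis (2 * pi * t * (v \<bullet> \<xi>))) has_vector_derivative \<i> * complex_of_real (2 * pi * (v \<bullet> \<xi>))) (at 0)"
    unfolding has_vector_derivative_def
    by (auto intro!: derivative_eq_intros simp: scaleR_conv_of_real algebra_simps)
  from difference_quotient_tendsto[OF this h(1)] h(2)
  have lim_multiplier: "(\<lambda>k. (cis (2 * pi * h k * (v \<bullet> \<xi>)) - 1) /\<^sub>R h k * fourier g \<xi>)
          \<longlonglongrightarrow> \<i> * complex_of_real (2 * pi * (v \<bullet> \<xi>)) * fourier g \<xi>"
    by (intro tendsto_mult_right) (auto simp: less_imp_neq[symmetric])
  have lim_fourier: "(\<lambda>k. (cis (2 * pi * h k * (v \<bullet> \<xi>)) - 1) /\<^sub>R h k * fourier g \<xi>)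
          \<longlonglongrightarrow> fourier (dir_deriv g v) \<xi>"
    using tendsto_fourier_difference_quotient[OF assms h, of v \<xi>]
    unfolding fourier_difference_quotient[OF assms] .
  from lim_fourier lim_multiplier show ?thesis
    by (rule LIMSEQ_unique)
qed

lemma
  fixes g :: "'a::euclidean_space \<Rightarrow> complex"
  assumes "test_function g"
  shows test_function_iterated_dir_deriv: "test_function (((\<lambda>g. dir_deriv g v) ^^ k) g)"
    and fourier_iterated_dir_deriv:
      "fourier (((\<lambda>g. dir_deriv g v) ^^ k) g) \<xi> = (\<i> * complex_of_real (2 * pi * (v \<bullet> \<xi>))) ^ k * fourier g \<xi>"
proof (induction k)
  case (Suc k)
  { case 1 show ?case using Suc.IH(1) by (simp add: test_function_dir_deriv) }
  { case 2 show ?case using Suc.IH by (simp add: fourier_dir_deriv) }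
qed (use assms in simp_all)

lemma fourier_decay:
  fixes g :: "'a::euclidean_space \<Rightarrow> complex"
  assumes "test_function g"
  shows "(2 * pi * \<bar>v \<bullet> \<xi>\<bar>) ^ k * norm (fourier g \<xi>)
           \<le> (\<integral>x. norm ((((\<lambda>g. dir_deriv g v) ^^ k) g) x) \<partial>lborel)"
  using norm_fourier_le[of "((\<lambda>g. dir_deriv g v) ^^ k) g" \<xi>]
  unfolding fourier_iterated_dir_deriv[OF assms]
  by (simp add: norm_mult norm_power abs_mult)

section \<open>Integrability of the Fourier transform\<close>

definition cube :: "real \<Rightarrow> (real^'n) set" where
  "cube R = cbox (\<chi> j. - R) (\<chi> j. R)"

lemma mem_cube: "x \<in> cube R \<longleftrightarrow> (\<forall>j. \<bar>x $ j\<bar> \<le> R)"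
  unfolding cube_def mem_box_cart by (auto simp: abs_le_iff minus_le_iff)

lemma measure_cube:
  assumes "R \<ge> 0"
  shows "measure lborel (cube R :: (real^'n) set) = (2 * R) ^ CARD('n)"
proof -
  have "(0::real^'n) \<in> cube R"
    using assms by (simp add: mem_cube)
  then show ?thesis
    unfolding cube_def by (subst content_cbox_cart) auto
qed

lemma integrable_indicator_cube: "integrable lborel (\<lambda>x::real^'n. indicator (cube R) x * (c::real))"
  using borel_integrable_compact[of "cube R :: (real^'n) set" "\<lambda>_. c"] by (simp add: cube_def)

lemma
  fixes c :: real and \<xi> :: "real^'n"
  defines "t \<equiv> \<lambda>m \<xi>. c / (2 ^ m) ^ Suc CARD('n) * indicator (cube (2 ^ Suc m)) \<xi>"
  assumes c: "c \<ge> 0"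
  shows summable_dyadic_cube_series: "summable (\<lambda>m. t m \<xi>)"
    and integrable_dyadic_cube_series: "integrable lborel (\<lambda>\<xi>. \<Sum>m. t m \<xi>)"
proof -
  define N where "N = CARD('n)"
  have t_nonneg: "0 \<le> t m \<xi>" for m \<xi>
    unfolding t_def using c by simp
  have t_le: "t m \<xi> \<le> c * (1 / 2) ^ m" for m \<xi>
  proof -
    have "t m \<xi> \<le> c / (2 ^ m) ^ Suc CARD('n)"
      unfolding t_def using c by (simp add: indicator_def)
    also have "\<dots> \<le> c / 2 ^ m"
      using c by (intro divide_left_mono) (auto intro: self_le_power)
    finally show ?thesis by (simp add: power_one_over)
  qed
  have geometric: "summable (\<lambda>m. a * (1 / 2 :: real) ^ m)" for a
    by (intro summable_mult summable_geometric) simp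
  show summable: "summable (\<lambda>m. t m \<xi>)" for \<xi>
    by (rule summable_comparison_test[OF _ geometric[of c]]) (use t_nonneg t_le in auto)
  have integral_t: "(\<integral>\<xi>. norm (t m \<xi>) \<partial>lborel) = c * 4 ^ N * (1 / 2) ^ m" for m
  proof -
    have "(\<integral>\<xi>. norm (t m \<xi>) \<partial>lborel)
        = measure lborel (cube (2 ^ Suc m) :: (real^'n) set) * (c / (2 ^ m) ^ Suc N)"
      unfolding t_def N_def using c by (simp add: mult.commute)
    also have "\<dots> = (4 * 2 ^ m) ^ N * (c / (2 ^ m * (2 ^ m) ^ N))"
      by (simp add: measure_cube N_def)
    also have "\<dots> = c * 4 ^ N * (1 / 2) ^ m"
      by (simp add: power_one_over field_simps)
    finally show ?thesis .
  qed
  show "integrable lborel (\<lambda>\<xi>. \<Sum>m. t m \<xi>)"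
  proof (rule integrable_suminf)
    show "integrable lborel (t m)" for m
      using integrable_indicator_cube[of "2 ^ Suc m" "c / (2 ^ m) ^ Suc CARD('n)"]
      unfolding t_def by (simp add: mult.commute)
    show "AE \<xi> in lborel. summable (\<lambda>m. norm (t m \<xi>))"
      using summable t_nonneg by simp
    show "summable (\<lambda>m. \<integral>\<xi>. norm (t m \<xi>) \<partial>lborel)"
      unfolding integral_t by (rule geometric)
  qed
qed

lemma dyadic_cube_decay_bound:
  fixes \<xi> :: "real^'n" and y C :: real
  assumes "\<xi> \<notin> cube 1" "0 \<le> C" and decay: "\<And>j. \<bar>\<xi> $ j\<bar> ^ k * y \<le> C"
  obtains m where "y \<le> C / (2 ^ m) ^ k * indicator (cube (2 ^ Suc m)) \<xi>"
proof -
  define M where "M = Max (range (\<lambda>j. \<bar>\<xi> $ j\<bar>))"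
  have M_ge: "\<bar>\<xi> $ j\<bar> \<le> M" for j
    unfolding M_def by (rule Max_ge) auto
  have "M \<in> range (\<lambda>j. \<bar>\<xi> $ j\<bar>)"
    unfolding M_def by (rule Max_in) auto
  then obtain j0 where j0: "M = \<bar>\<xi> $ j0\<bar>"
    by blast
  have M1: "1 < M"
    using assms(1) M_ge unfolding mem_cube by (meson not_le order.strict_trans2)
  obtain m where m: "2 ^ m \<le> M" "M < 2 ^ Suc m"
  proof -
    obtain n where "M < 2 ^ n"
      using real_arch_pow[of 2 M] by auto
    then show ?thesis
      using exists_least_lemma[of "\<lambda>n. M < 2 ^ n"] M1 that by (auto simp: not_less)
  qed
  have "M ^ k * y \<le> C"
    using decay[of j0] j0 by simp
  then have "y \<le> C / M ^ k"
    using M1 by (simp add: pos_le_divide_eq mult.commute)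
  also have "\<dots> \<le> C / (2 ^ m) ^ k"
    using assms(2) m(1) M1 by (intro divide_left_mono power_mono mult_pos_pos) auto
  also have "\<dots> = C / (2 ^ m) ^ k * indicator (cube (2 ^ Suc m)) \<xi>"
  proof -
    have "\<xi> \<in> cube (2 ^ Suc m)"
      unfolding mem_cube using M_ge m(2) by (meson less_imp_le order_trans)
    then show ?thesis
      by simp
  qed
  finally show thesis
    by (rule that)
qed

lemma integrable_of_coordinate_decay:
  fixes g :: "real^'n \<Rightarrow> 'b::{banach, second_countable_topology}"
  assumes meas: "g \<in> borel_measurable lborel"
    and bounded: "\<And>\<xi>. norm (g \<xi>) \<le> C0"
    and decay: "\<And>\<xi> j. \<bar>\<xi> $ j\<bar> ^ Suc CARD('n) * norm (g \<xi>) \<le> C1"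
  shows "integrable lborel g"
proof -
  define t where "t m \<xi> = C1 / (2 ^ m) ^ Suc CARD('n) * indicator (cube (2 ^ Suc m)) \<xi>" for m and \<xi> :: "real^'n"
  \<comment> \<open>On the shell \<open>2^m \<le> max\<^sub>j |\<xi>$j| < 2^(m+1)\<close> the \<open>m\<close>-th term of the series dominates \<open>g\<close>.\<close>
  define w where "w \<xi> = indicator (cube 1) \<xi> * C0 + (\<Sum>m. t m \<xi>)" for \<xi> :: "real^'n"
  have "0 \<le> \<bar>0 $ j\<bar> ^ Suc CARD('n) * norm (g 0)" for j
    by simp
  then have C1: "0 \<le> C1"
    using decay order_trans by blast
  have w_int: "integrable lborel w"
    unfolding w_def[abs_def] t_def
    by (intro Bochner_Integration.integrable_add integrable_indicator_cube integrable_dyadic_cube_series C1)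
  have "norm (g \<xi>) \<le> w \<xi>" for \<xi>
  proof (cases "\<xi> \<in> cube 1")
    case True
    have "0 \<le> (\<Sum>m. t m \<xi>)"
      unfolding t_def by (intro suminf_nonneg summable_dyadic_cube_series C1) (simp add: C1)
    then show ?thesis
      using True bounded[of \<xi>] unfolding w_def by simp
  next
    case False
    obtain m where "norm (g \<xi>) \<le> t m \<xi>"
      using dyadic_cube_decay_bound[OF False C1 decay] unfolding t_def by blast
    also have "\<dots> \<le> (\<Sum>m. t m \<xi>)"
      unfolding t_def
      by (intro suminf_nonneg summable_dyadic_cube_series C1 sum_le_suminf[where I = "{m}", simplified]) (auto simp: C1)
    also have "\<dots> \<le> w \<xi>"
      using False unfolding w_def by simp
    finally show ?thesis .
  qed
  then show ?thesis
    by (intro Bochner_Integration.integrable_bound[OF w_int meas] AE_I2)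
      (auto intro: order_trans[OF _ abs_ge_self])
qed

lemma integrable_fourier_test_function:
  fixes f :: "real^'n \<Rightarrow> complex"
  assumes f: "test_function f"
  shows "integrable lborel (fourier f)"
proof -
  define D where "D j = ((\<lambda>g. dir_deriv g (axis j 1)) ^^ Suc CARD('n)) f" for j
  define I where "I = (\<Sum>j\<in>UNIV. \<integral>x. norm (D j x) \<partial>lborel)"
  show ?thesis
  proof (rule integrable_of_coordinate_decay)
    show "fourier f \<in> borel_measurable lborel"
      using f by (rule borel_measurable_fourier_test_function)
    show "norm (fourier f \<xi>) \<le> (\<integral>x. norm (f x) \<partial>lborel)" for \<xi>
      by (rule norm_fourier_le)
    show "\<bar>\<xi> $ j\<bar> ^ Suc CARD('n) * norm (fourier f \<xi>) \<le> I / (2 * pi) ^ Suc CARD('n)" for \<xi> j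
    proof -
      have "(2 * pi * \<bar>\<xi> $ j\<bar>) ^ Suc CARD('n) * norm (fourier f \<xi>) \<le> (\<integral>x. norm (D j x) \<partial>lborel)"
        using fourier_decay[OF f, of "axis j 1" \<xi> "Suc CARD('n)"]
        unfolding D_def by (simp add: cart_eq_inner_axis inner_commute)
      also have "\<dots> \<le> I"
        unfolding I_def by (rule member_le_sum) auto
      finally show ?thesis
        by (simp add: pos_le_divide_eq power_mult_distrib mult_ac)
    qed
  qed
qed

section \<open>Surface measure and superposition of multipliers\<close>

lemma space_sphere_measure: "space (sphere_measure :: 'a::euclidean_space measure) = sphere 0 1"
  unfolding sphere_measure_def by simp

lemma finite_measure_sphere_measure: "finite_measure (sphere_measure :: 'a::euclidean_space measure)"
proof
  define M :: "'a measure"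
    where "M = density lborel (\<lambda>x. ennreal (real DIM('a)) * indicator (cball 0 1 - {0}) x)"
  have [measurable]: "cball (0::'a) 1 - {0} \<in> sets borel"
    by auto
  have "emeasure M (space M) = (\<integral>\<^sup>+x. ennreal (real DIM('a)) * indicator (cball 0 1 - {0}) (x::'a) \<partial>lborel)"
    unfolding M_def by (subst emeasure_density) auto
  also have "\<dots> = ennreal (real DIM('a)) * emeasure lborel (cball (0::'a) 1 - {0})"
    by (rule nn_integral_cmult_indicator) simp
  also have "\<dots> < \<infinity>"
    using emeasure_bounded_finite[of "cball (0::'a) 1 - {0}"] bounded_subset[OF bounded_cball]
    by (auto simp: ennreal_mult_less_top)
  finally have finite: "emeasure M (space M) < \<infinity>" .
  \<comment> \<open>\<open>x /\<^sub>R norm x\<close> sends 0 outside the sphere, so it is not measurable into the sphere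
    and \<open>emeasure_distr\<close> is unavailable; we bound through the definition of \<open>distr\<close>.\<close>
  have le: "emeasure sphere_measure A \<le> emeasure M (space M)" for A :: "'a set"
  proof -
    have "emeasure M B \<le> emeasure M (space M)" for B
      by (rule emeasure_space)
    then show ?thesis
      unfolding sphere_measure_def distr_def emeasure_measure_of_conv M_def[symmetric] by auto
  qed
  show "emeasure sphere_measure (space sphere_measure :: 'a set) \<noteq> \<infinity>"
    using order.strict_trans1[OF le finite] by (simp add: less_top)
qed

lemma measurable_pair_sphere_measure:
  fixes H :: "'a::euclidean_space \<times> 'a \<Rightarrow> 'c::topological_space"
  assumes "H \<in> borel_measurable borel"
  shows "H \<in> borel_measurable (sphere_measure \<Otimes>\<^sub>M lborel)"
proof -
  let ?P = "(sphere_measure :: 'a measure) \<Otimes>\<^sub>M (lborel :: 'a measure)"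
  have "(\<lambda>x. x) \<in> measurable (restrict_space borel (sphere (0::'a) 1)) borel"
    by (rule measurable_restrict_space1) simp
  then have "(\<lambda>x. x) \<in> measurable (sphere_measure :: 'a measure) borel"
    by (simp add: sphere_measure_def cong: measurable_cong_sets)
  then have "fst \<in> measurable ?P borel"
    by (rule measurable_compose[OF measurable_fst])
  moreover have "snd \<in> measurable ?P borel"
    using measurable_snd[of "sphere_measure :: 'a measure" "lborel :: 'a measure"] by simp
  ultimately have "(\<lambda>p. (fst p, snd p)) \<in> measurable ?P (borel \<Otimes>\<^sub>M borel)"
    by (rule measurable_Pair)
  then have "(\<lambda>p. p) \<in> measurable ?P borel"
    by (simp add: borel_prod)
  from measurable_compose[OF this assms] show ?thesis .
qed

lemma multiplier_op_scale:
  "multiplier_op (\<lambda>\<xi>. c * m \<xi>) f x = c * multiplier_op m f x"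
  unfolding multiplier_op_def by (simp add: mult.assoc)

lemma (in pair_sigma_finite) integrable_bounded_kernel_product:
  fixes K :: "'a \<Rightarrow> 'b \<Rightarrow> 'c::{real_normed_field, banach, second_countable_topology}"
  assumes K_meas: "(\<lambda>(x, y). K x y) \<in> borel_measurable (M1 \<Otimes>\<^sub>M M2)"
    and K_bounded: "\<And>x y. x \<in> space M1 \<Longrightarrow> norm (K x y) \<le> B"
    and \<phi>: "integrable M1 \<phi>" and E: "integrable M2 E"
  shows "integrable (M1 \<Otimes>\<^sub>M M2) (\<lambda>(x, y). K x y * \<phi> x * E y)"
proof -
  define G where "G x y = K x y * \<phi> x * E y" for x y
  have G_meas: "(\<lambda>(x, y). G x y) \<in> borel_measurable (M1 \<Otimes>\<^sub>M M2)"
    unfolding G_def using K_meas \<phi> E by measurable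
  have G_norm: "norm (G x y) \<le> B * norm (\<phi> x) * norm (E y)" if "x \<in> space M1" for x y
  proof -
    have "norm (K x y) * (norm (\<phi> x) * norm (E y)) \<le> B * (norm (\<phi> x) * norm (E y))"
      using K_bounded[OF that] by (rule mult_right_mono) simp
    then show ?thesis
      by (simp add: G_def norm_mult mult.assoc)
  qed
  have G_section_int: "integrable M2 (G x)" if x: "x \<in> space M1" for x
  proof (rule Bochner_Integration.integrable_bound)
    show "integrable M2 (\<lambda>y. B * norm (\<phi> x) * norm (E y))"
      using E by (intro integrable_mult_right integrable_norm)
    show "G x \<in> borel_measurable M2"
      using measurable_Pair2[OF G_meas x] by simp
    show "AE y in M2. norm (G x y) \<le> norm (B * norm (\<phi> x) * norm (E y))"
      using G_norm[OF x] by (intro AE_I2) (auto intro: order_trans[OF _ abs_ge_self])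
  qed
  have "integrable (M1 \<Otimes>\<^sub>M M2) (\<lambda>(x, y). G x y)"
  proof (rule Fubini_integrable[OF G_meas])
    show "AE x in M1. integrable M2 (\<lambda>y. case (x, y) of (x, y) \<Rightarrow> G x y)"
      using G_section_int by simp
    show "integrable M1 (\<lambda>x. \<integral>y. norm (case (x, y) of (x, y) \<Rightarrow> G x y) \<partial>M2)"
    proof (rule Bochner_Integration.integrable_bound)
      show "integrable M1 (\<lambda>x. B * (\<integral>y. norm (E y) \<partial>M2) * norm (\<phi> x))"
        using \<phi> by (intro integrable_mult_right integrable_norm)
      show "(\<lambda>x. \<integral>y. norm (case (x, y) of (x, y) \<Rightarrow> G x y) \<partial>M2) \<in> borel_measurable M1"
        using G_meas by (intro M2.borel_measurable_lebesgue_integral) (simp add: case_prod_beta')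
      have "(\<integral>y. norm (G x y) \<partial>M2) \<le> (\<integral>y. B * norm (\<phi> x) * norm (E y) \<partial>M2)" if x: "x \<in> space M1" for x
        using G_section_int[OF x] E G_norm[OF x]
        by (intro integral_mono integrable_mult_right integrable_norm) auto
      then show "AE x in M1. norm (\<integral>y. norm (case (x, y) of (x, y) \<Rightarrow> G x y) \<partial>M2)
          \<le> norm (B * (\<integral>y. norm (E y) \<partial>M2) * norm (\<phi> x))"
        by (intro AE_I2) (auto simp: mult_ac intro: order_trans[OF _ abs_ge_self])
    qed
  qed
  then show ?thesis
    unfolding G_def .
qed

lemma multiplier_op_superposition:
  fixes M :: "'b measure" and K :: "'b \<Rightarrow> 'a::euclidean_space \<Rightarrow> complex"
  assumes "sigma_finite_measure M"
    and K_meas: "(\<lambda>(\<theta>, \<xi>). K \<theta> \<xi>) \<in> borel_measurable (M \<Otimes>\<^sub>M lborel)"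
    and K_bounded: "\<And>\<theta> \<xi>. \<theta> \<in> space M \<Longrightarrow> norm (K \<theta> \<xi>) \<le> B"
    and \<phi>: "integrable M \<phi>"
    and fourier_meas: "fourier f \<in> borel_measurable lborel"
    and fourier_int: "integrable lborel (fourier f)"
  shows "multiplier_op (\<lambda>\<xi>. \<integral>\<theta>. K \<theta> \<xi> * \<phi> \<theta> \<partial>M) f x = (\<integral>\<theta>. multiplier_op (K \<theta>) f x * \<phi> \<theta> \<partial>M)"
proof -
  interpret pair_sigma_finite M "lborel :: 'a measure"
    using assms(1) lborel.sigma_finite_measure_axioms by (simp add: pair_sigma_finite_def)
  define E where "E \<xi> = fourier f \<xi> * cis (2 * pi * (x \<bullet> \<xi>))" for \<xi>
  have E_meas: "E \<in> borel_measurable lborel"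
  proof -
    have "(\<lambda>\<xi>::'a. cis (2 * pi * (x \<bullet> \<xi>))) \<in> borel_measurable borel"
      by (intro borel_measurable_continuous_onI continuous_intros)
    then show ?thesis
      unfolding E_def using fourier_meas by measurable
  qed
  have "integrable lborel E"
    using fourier_int E_meas by (rule Bochner_Integration.integrable_bound) (simp add: E_def norm_mult)
  note G_int = integrable_bounded_kernel_product[OF K_meas K_bounded \<phi> this]
  have "multiplier_op (\<lambda>\<xi>. \<integral>\<theta>. K \<theta> \<xi> * \<phi> \<theta> \<partial>M) f x = (\<integral>\<xi>. \<integral>\<theta>. K \<theta> \<xi> * \<phi> \<theta> * E \<xi> \<partial>M \<partial>lborel)"
    unfolding multiplier_op_def E_def
    by (intro Bochner_Integration.integral_cong refl) (simp add: mult.assoc[symmetric])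
  also have "\<dots> = (\<integral>\<theta>. \<integral>\<xi>. K \<theta> \<xi> * \<phi> \<theta> * E \<xi> \<partial>lborel \<partial>M)"
    using Fubini_integral[OF G_int] by simp
  also have "\<dots> = (\<integral>\<theta>. multiplier_op (K \<theta>) f x * \<phi> \<theta> \<partial>M)"
    unfolding multiplier_op_def E_def
    by (intro Bochner_Integration.integral_cong refl)
      (simp del: integral_mult_left_zero add: integral_mult_left_zero[symmetric] mult_ac)
  finally show ?thesis .
qed

lemma abs_inner_powr_div_norm_powr_le_1:
  fixes \<xi> \<theta> :: "'a::real_inner"
  assumes "norm \<theta> = 1" "r \<ge> 0"
  shows "\<bar>\<xi> \<bullet> \<theta>\<bar> powr r / norm \<xi> powr r \<le> 1"
proof -
  have "\<bar>\<xi> \<bullet> \<theta>\<bar> \<le> norm \<xi>"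
    using Cauchy_Schwarz_ineq2[of \<xi> \<theta>] assms(1) by simp
  then have "\<bar>\<xi> \<bullet> \<theta>\<bar> powr r \<le> norm \<xi> powr r"
    using assms(2) by (intro powr_mono2) auto
  then show ?thesis
    by (cases "norm \<xi> powr r = 0") (auto simp: divide_le_eq_1)
qed

lemma ratio_symbol_eq_scaled_average:
  fixes M :: "'a::real_inner measure" and \<phi> :: "'a \<Rightarrow> complex"
  assumes "(\<integral>\<theta>. \<bar>\<xi> \<bullet> \<theta>\<bar> powr r \<partial>M) = A * norm \<xi> powr r"
  shows "(\<integral>\<theta>. complex_of_real (\<bar>\<xi> \<bullet> \<theta>\<bar> powr r) * \<phi> \<theta> \<partial>M) / complex_of_real (\<integral>\<theta>. \<bar>\<xi> \<bullet> \<theta>\<bar> powr r \<partial>M)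
       = complex_of_real (inverse A) * (\<integral>\<theta>. complex_of_real (\<bar>\<xi> \<bullet> \<theta>\<bar> powr r / norm \<xi> powr r) * \<phi> \<theta> \<partial>M)"
proof -
  have "(\<integral>\<theta>. complex_of_real (\<bar>\<xi> \<bullet> \<theta>\<bar> powr r / norm \<xi> powr r) * \<phi> \<theta> \<partial>M)
      = (\<integral>\<theta>. complex_of_real (\<bar>\<xi> \<bullet> \<theta>\<bar> powr r) * \<phi> \<theta> \<partial>M) / complex_of_real (norm \<xi> powr r)"
    by (simp del: integral_divide_zero add: integral_divide_zero[symmetric] field_simps)
  then show ?thesis
    using assms by (simp add: divide_inverse mult_ac)
qed

theorem mainTheorem3:
  fixes r :: real and \<phi> :: "real^'n \<Rightarrow> complex" and A :: real
    and f :: "real^'n \<Rightarrow> complex"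
  assumes n2: "CARD('n) \<ge> 2"
    and r: "r > 0"
    and phi_meas: "\<phi> \<in> borel_measurable sphere_measure"
    and phi_bdd: "\<exists>C. AE \<theta> in sphere_measure. norm (\<phi> \<theta>) \<le> C"
    and A_pos: "A > 0"
    and A_def: "\<forall>\<xi>::real^'n. (\<integral>\<theta>. \<bar>\<xi> \<bullet> \<theta>\<bar> powr r \<partial>sphere_measure) = A * norm \<xi> powr r"
    and f: "test_function f"
  shows "AE x in lborel.
     multiplier_op
       (\<lambda>\<xi>. (\<integral>\<theta>. complex_of_real (\<bar>\<xi> \<bullet> \<theta>\<bar> powr r) * \<phi> \<theta> \<partial>sphere_measure)
              / complex_of_real (\<integral>\<theta>. \<bar>\<xi> \<bullet> \<theta>\<bar> powr r \<partial>sphere_measure)) f x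
     = complex_of_real (inverse A) *
       (\<integral>\<theta>. multiplier_op (\<lambda>\<xi>. complex_of_real (\<bar>\<xi> \<bullet> \<theta>\<bar> powr r / norm \<xi> powr r)) f x * \<phi> \<theta>
          \<partial>sphere_measure)"
proof (rule AE_I2, goal_cases)
  case (1 x)
  interpret sphere: finite_measure "sphere_measure :: (real^'n) measure"
    by (rule finite_measure_sphere_measure)
  let ?m = "\<lambda>\<theta> \<xi>::real^'n. complex_of_real (\<bar>\<xi> \<bullet> \<theta>\<bar> powr r / norm \<xi> powr r)"
  have m_meas: "(\<lambda>(\<theta>, \<xi>). ?m \<theta> \<xi>) \<in> borel_measurable (sphere_measure \<Otimes>\<^sub>M lborel)"
    by (rule measurable_pair_sphere_measure) (simp add: borel_prod[symmetric] case_prod_beta')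
  have m_bounded: "norm (?m \<theta> \<xi>) \<le> 1" if "\<theta> \<in> space sphere_measure" for \<theta> \<xi>
    using that r abs_inner_powr_div_norm_powr_le_1[of \<theta> r \<xi>]
    by (simp add: space_sphere_measure norm_divide)
  have phi_int: "integrable sphere_measure \<phi>"
    using phi_bdd phi_meas sphere.integrable_const_bound by blast
  have fourier_meas: "fourier f \<in> borel_measurable lborel"
    using f by (rule borel_measurable_fourier_test_function)
  note superposition = multiplier_op_superposition[OF sphere.sigma_finite_measure_axioms
      m_meas m_bounded phi_int fourier_meas integrable_fourier_test_function[OF f]]
  show ?case
    unfolding ratio_symbol_eq_scaled_average[OF A_def[rule_format]] multiplier_op_scale
    by (subst superposition) simp_all
qed

end
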